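(* Consider the Filtered Greedy Strategy (\texttt{FGS}), which maintains a current set $\mathcal B_1$ of atomic mini-batches and iteratively removes mini-batches from it. If a file $f$ satisfies the inequality $$n(f)\Bigl(l(f)+\sum_{b\in\mathcal B_1,\ l(b)<l(f)}s(b)\Bigr) < s(f)\Bigl(\sum_{f'\in\mathcal F,\ l(f')<l(f)}n(f')+\sum_{f'\in\mathcal F\setminus\mathcal F(\mathcal B_1),\ l(f')>l(f)}n(f')\Bigr)$$ (evaluated with the current set $\mathcal B_1$) in the $i$-th iteration of \texttt{FGS}, then $f$ also satisfies this inequality (evaluated with the then-current $\mathcal B_1$) in the $j$-th iteration for every $j\ge i$.
   Context: A single-track tape stores a sequence of files $\mathcal F=(f_1,\dots,f_n)$ laid out contiguously from left to right: file $f$ occupies blocks $l(f),\dots,r(f)$ and has size $s(f)=r(f)-l(f)+1$, with $l(f_1)=1$, $l(f_{i+1})=r(f_i)+1$. $\mathcal R$ is a finite set of read requests, each associated with a file; $n(f)$ is the number of requests for $f$. A mini-batch is a pair $b=(f,f')$ of files with $l(f)\le l(f')$; $l(b)=l(f)$, $r(b)=r(f')$, $s(b)=r(b)-l(b)+1$, $\mathcal F(b)$ is the set of files $g$ with $l(b)\le l(g)$, $r(g)\le r(b)$, atomic if $|\mathcal F(b)|=1$, and $\mathcal F(\mathcal B_1)=\bigcup_{b\in\mathcal B_1}\mathcal F(b)$. \texttt{FGS} starts with $\mathcal B_1=\{(f,f): f\in\mathcal F\setminus\{f_1\},\ n(f)>0\}$ (the output of the Greedy Strategy) and then, for $|\mathcal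 F|$ rounds, inspects each file $f\in\mathcal F(\mathcal B_1)$ and removes $(f,f)$ from $\mathcal B_1$ whenever the displayed inequality holds for the current $\mathcal B_1$; each inspection is an iteration. *)

theory Defs
  imports Main
begin

text \<open>Tape with files indexed 1..N (index i = file f_i).  s i is the size of f_i,
  nreq i the number of read requests for f_i.  A mini-batch is a pair of file indices.\<close>

definition lft :: "(nat \<Rightarrow> nat) \<Rightarrow> nat \<Rightarrow> nat" where
  "lft s i = 1 + (\<Sum>k\<in>{1..<i}. s k)"

definition rgt :: "(nat \<Rightarrow> nat) \<Rightarrow> nat \<Rightarrow> nat" where
  "rgt s i = lft s i + s i - 1"

definition mb_size :: "(nat \<Rightarrow> nat) \<Rightarrow> nat \<times> nat \<Rightarrow> nat" where
  "mb_size s b = rgt s (snd b) - lft s (fst b) + 1"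

definition mb_files :: "nat \<Rightarrow> (nat \<Rightarrow> nat) \<Rightarrow> nat \<times> nat \<Rightarrow> nat set" where
  "mb_files N s b = {g \<in> {1..N}. lft s (fst b) \<le> lft s g \<and> rgt s g \<le> rgt s (snd b)}"

definition mbs_files :: "nat \<Rightarrow> (nat \<Rightarrow> nat) \<Rightarrow> (nat \<times> nat) set \<Rightarrow> nat set" where
  "mbs_files N s B = (\<Union>b\<in>B. mb_files N s b)"

definition fgs_ineq :: "nat \<Rightarrow> (nat \<Rightarrow> nat) \<Rightarrow> (nat \<Rightarrow> nat) \<Rightarrow> (nat \<times> nat) set \<Rightarrow> nat \<Rightarrow> bool" where
  "fgs_ineq N s nreq B f \<longleftrightarrow>
     nreq f * (lft s f + (\<Sum>b\<in>{b\<in>B. lft s (fst b) < lft s f}. mb_size s b))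
     < s f * ((\<Sum>f'\<in>{f'\<in>{1..N}. lft s f' < lft s f}. nreq f')
              + (\<Sum>f'\<in>{f'\<in>{1..N} - mbs_files N s B. lft s f' > lft s f}. nreq f'))"

definition greedy :: "nat \<Rightarrow> (nat \<Rightarrow> nat) \<Rightarrow> (nat \<times> nat) set" where
  "greedy N nreq = {(f, f) | f. f \<in> {2..N} \<and> nreq f > 0}"

definition fgs_step :: "nat \<Rightarrow> (nat \<Rightarrow> nat) \<Rightarrow> (nat \<Rightarrow> nat) \<Rightarrow> (nat \<times> nat) set \<Rightarrow> nat \<Rightarrow> (nat \<times> nat) set" where
  "fgs_step N s nreq B f = (if fgs_ineq N s nreq B f then B - {(f, f)} else B)"

text \<open>Iterations of one round: list of (inspected file, B1 at that iteration).\<close>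
fun round_trace :: "nat \<Rightarrow> (nat \<Rightarrow> nat) \<Rightarrow> (nat \<Rightarrow> nat) \<Rightarrow> (nat \<times> nat) set \<Rightarrow> nat list
    \<Rightarrow> (nat \<times> (nat \<times> nat) set) list" where
  "round_trace N s nreq B [] = []"
| "round_trace N s nreq B (f # fs) = (f, B) # round_trace N s nreq (fgs_step N s nreq B f) fs"

definition round_end :: "nat \<Rightarrow> (nat \<Rightarrow> nat) \<Rightarrow> (nat \<Rightarrow> nat) \<Rightarrow> (nat \<times> nat) set \<Rightarrow> nat list
    \<Rightarrow> (nat \<times> nat) set" where
  "round_end N s nreq B fs = fold (\<lambda>f B. fgs_step N s nreq B f) fs B"

text \<open>All iterations of m rounds; ord fixes the order in which F(B1) is inspected in a round.\<close>
fun fgs_trace :: "nat \<Rightarrow> (nat \<Rightarrow> nat) \<Rightarrow> (nat \<Rightarrow> nat) \<Rightarrow> (nat set \<Rightarrow> nat list)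
    \<Rightarrow> (nat \<times> nat) set \<Rightarrow> nat \<Rightarrow> (nat \<times> (nat \<times> nat) set) list" where
  "fgs_trace N s nreq ord B 0 = []"
| "fgs_trace N s nreq ord B (Suc m) =
     round_trace N s nreq B (ord (mbs_files N s B))
     @ fgs_trace N s nreq ord (round_end N s nreq B (ord (mbs_files N s B))) m"

definition fgs_iterations :: "nat \<Rightarrow> (nat \<Rightarrow> nat) \<Rightarrow> (nat \<Rightarrow> nat) \<Rightarrow> (nat set \<Rightarrow> nat list)
    \<Rightarrow> (nat \<times> (nat \<times> nat) set) list" where
  "fgs_iterations N s nreq ord = fgs_trace N s nreq ord (greedy N nreq) N"

end

theory Submission
  imports Defs
begin

text \<open>FGS only ever deletes mini-batches, so the current set \<open>B\<^sub>1\<close> shrinks from one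
  iteration to the next. Shrinking \<open>B\<^sub>1\<close> can only decrease the left-hand side of the
  inequality (fewer mini-batches to the left of \<open>f\<close>) and only increase the right-hand side
  (fewer files are covered by \<open>B\<^sub>1\<close>), so once the inequality holds it keeps holding. Neither
  positive file sizes nor the inspection order play a role.\<close>

lemma fgs_ineq_antimono:
  assumes "finite B" and "B' \<subseteq> B" and "fgs_ineq N s nreq B f"
  shows "fgs_ineq N s nreq B' f"
proof -
  let ?left = "\<lambda>B. \<Sum>b\<in>{b\<in>B. lft s (fst b) < lft s f}. mb_size s b"
  let ?right = "\<lambda>B. \<Sum>f'\<in>{f'\<in>{1..N} - mbs_files N s B. lft s f' > lft s f}. nreq f'"
  have "?left B' \<le> ?left B"
    by (rule sum_mono2) (use assms(1,2) in auto)
  then have "nreq f * (lft s f + ?left B') \<le> nreq f * (lft s f + ?left B)"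
    by simp
  moreover have "mbs_files N s B' \<subseteq> mbs_files N s B"
    using assms(2) unfolding mbs_files_def by auto
  then have "?right B \<le> ?right B'"
    by (intro sum_mono2) auto
  then have "s f * ((\<Sum>f'\<in>{f'\<in>{1..N}. lft s f' < lft s f}. nreq f') + ?right B)
      \<le> s f * ((\<Sum>f'\<in>{f'\<in>{1..N}. lft s f' < lft s f}. nreq f') + ?right B')"
    by simp
  ultimately show ?thesis
    using assms(3) unfolding fgs_ineq_def by linarith
qed

lemma fgs_step_subset: "fgs_step N s nreq B f \<subseteq> B"
  unfolding fgs_step_def by auto

lemma round_end_Nil [simp]: "round_end N s nreq B [] = B"
  by (simp add: round_end_def)

lemma round_end_Cons [simp]:
  "round_end N s nreq B (f # fs) = round_end N s nreq (fgs_step N s nreq B f) fs"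
  by (simp add: round_end_def)

lemma round_end_subset: "round_end N s nreq B fs \<subseteq> B"
  by (induction fs arbitrary: B) (auto dest: subsetD[OF fgs_step_subset])

lemma round_trace_between:
  "x \<in> set (round_trace N s nreq B fs) \<Longrightarrow>
    round_end N s nreq B fs \<subseteq> snd x \<and> snd x \<subseteq> B"
proof (induction fs arbitrary: B)
  case (Cons f fs)
  then show ?case
    using round_end_subset fgs_step_subset by fastforce
qed simp

lemma round_trace_decreasing:
  "sorted_wrt (\<lambda>x y. snd y \<subseteq> snd x) (round_trace N s nreq B fs)"
proof (induction fs arbitrary: B)
  case (Cons f fs)
  then show ?case
    using round_trace_between fgs_step_subset by fastforce
qed simp

lemma fgs_trace_subset:
  "x \<in> set (fgs_trace N s nreq ord B m) \<Longrightarrow> snd x \<subseteq> B"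
proof (induction m arbitrary: B)
  case (Suc m)
  let ?fs = "ord (mbs_files N s B)"
  from Suc.prems consider
      "x \<in> set (round_trace N s nreq B ?fs)"
    | "x \<in> set (fgs_trace N s nreq ord (round_end N s nreq B ?fs) m)"
    by auto
  then show ?case
  proof cases
    case 1
    then show ?thesis by (simp add: round_trace_between)
  next
    case 2
    then show ?thesis using Suc.IH round_end_subset by blast
  qed
qed simp

lemma fgs_trace_decreasing:
  "sorted_wrt (\<lambda>x y. snd y \<subseteq> snd x) (fgs_trace N s nreq ord B m)"
proof (induction m arbitrary: B)
  case (Suc m)
  let ?fs = "ord (mbs_files N s B)"
  have "snd y \<subseteq> snd x"
    if "x \<in> set (round_trace N s nreq B ?fs)"
      and "y \<in> set (fgs_trace N s nreq ord (round_end N s nreq B ?fs) m)" for x y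
    using that round_trace_between fgs_trace_subset by blast
  then show ?case
    using Suc.IH round_trace_decreasing by (simp add: sorted_wrt_append)
qed simp

lemma finite_greedy: "finite (greedy N nreq)"
proof (rule finite_subset)
  show "greedy N nreq \<subseteq> (\<lambda>f. (f, f)) ` {2..N}"
    unfolding greedy_def by auto
qed simp

theorem lemma1:
  fixes N :: nat and s nreq :: "nat \<Rightarrow> nat" and ord :: "nat set \<Rightarrow> nat list"
    and f i j :: nat
  assumes pos: "\<forall>k\<in>{1..N}. s k > 0"
    and ord: "\<forall>S. finite S \<longrightarrow> set (ord S) = S \<and> distinct (ord S)"
    and f: "f \<in> {1..N}"
    and ij: "i \<le> j" "j < length (fgs_iterations N s nreq ord)"
    and hi: "fgs_ineq N s nreq (snd (fgs_iterations N s nreq ord ! i)) f"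
  shows "fgs_ineq N s nreq (snd (fgs_iterations N s nreq ord ! j)) f"
proof (rule fgs_ineq_antimono[OF _ _ hi])
  let ?T = "fgs_iterations N s nreq ord"
  have "i < length ?T"
    using ij by simp
  then show "finite (snd (?T ! i))"
    using fgs_trace_subset finite_greedy
    unfolding fgs_iterations_def by (meson finite_subset nth_mem)
  show "snd (?T ! j) \<subseteq> snd (?T ! i)"
  proof (cases "i = j")
    case False
    then show ?thesis
      using ij fgs_trace_decreasing
      unfolding fgs_iterations_def by (simp add: sorted_wrt_iff_nth_less)
  qed simp
qed

end
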